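(* Let $M=(S,\mathrm{Act},P)$ be an MDP, $T\subseteq S$, $\mathrm{opt}\in\{\min,\max\}$, and let $r$ be the least fixed point of the complementary distance operator $\tilde D^{\mathrm{opt}}$ (w.r.t. the pointwise order on $\mathbb{N}_\infty^S$). Then for all $s\in S$: $r(s)=\infty$ if and only if $\Pr^{\mathrm{opt}}_s(\Diamond T)=1$.
   Context: An MDP is a tuple $M=(S,\mathrm{Act},P)$ with $S$ finite, $\mathrm{Act}$ finite, $P\colon S\times\mathrm{Act}\times S\to[0,1]$ with $\sum_{s'}P(s,a,s')\in\{0,1\}$; $\mathrm{Act}(s)=\{a\mid\sum_{s'}P(s,a,s')=1\}$ is nonempty for all $s$; $\mathrm{Post}(s,a)=\{s'\mid P(s,a,s')>0\}$. A strategy is $\sigma\colon S\to\mathrm{Act}$ with $\sigma(s)\in\mathrm{Act}(s)$, inducing a Markov chain with transitions $P(s,\sigma(s),\cdot)$; $\Pr^\sigma_s(\Diamond T)$ is the probability of visiting $T$ from $s$ and $\Pr^{\mathrm{opt}}_s(\Diamond T)=\mathrm{opt}_\sigma\Pr^\sigma_s(\Diamond T)$. $\mathbb{N}_\infty=\mathbb{N}\cup\{\infty\}$ with $\infty+1=\infty$. The complementary distance operator $\tilde D^{\mathrm{opt}}\colon\mathbb{N}_\infty^S\to\mathbb{N}_\infty^S$ is $\tilde D^{\mathrm{opt}}(r)(s)=\infty$ if $s\in T$, and for $s\notin T$: $\tilde D^{\mathrm{opt}}(r)(s)=\mathrm{opt}_{a\in\mathrm{Act}(s)}\big(\min_{s'\in\mathrm{Post}(s,a)}r(s')+[\exists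 u,v\in\mathrm{Post}(s,a)\colon r(u)\neq r(v)]\big)$, where $[\varphi]$ is $1$ if $\varphi$ holds and $0$ otherwise. This operator is monotone, so its least fixed point exists. *)

theory Defs
  imports Complex_Main "HOL-Library.Extended_Nat"
begin

text \<open>An MDP over a finite state type 's and finite action type 'a,
  given by its transition function P s a s'.  The state space S is UNIV.\<close>

definition Act :: "('s::finite \<Rightarrow> 'a::finite \<Rightarrow> 's \<Rightarrow> real) \<Rightarrow> 's \<Rightarrow> 'a set" where
  "Act P s = {a. (\<Sum>s'\<in>UNIV. P s a s') = 1}"

definition Post :: "('s::finite \<Rightarrow> 'a::finite \<Rightarrow> 's \<Rightarrow> real) \<Rightarrow> 's \<Rightarrow> 'a \<Rightarrow> 's set" where
  "Post P s a = {s'. P s a s' > 0}"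

definition is_mdp :: "('s::finite \<Rightarrow> 'a::finite \<Rightarrow> 's \<Rightarrow> real) \<Rightarrow> bool" where
  "is_mdp P \<longleftrightarrow>
     (\<forall>s a s'. 0 \<le> P s a s' \<and> P s a s' \<le> 1) \<and>
     (\<forall>s a. (\<Sum>s'\<in>UNIV. P s a s') \<in> {0, 1}) \<and>
     (\<forall>s. Act P s \<noteq> {})"

definition strategies :: "('s::finite \<Rightarrow> 'a::finite \<Rightarrow> 's \<Rightarrow> real) \<Rightarrow> ('s \<Rightarrow> 'a) set" where
  "strategies P = {\<sigma>. \<forall>s. \<sigma> s \<in> Act P s}"

fun reach_within :: "('s::finite \<Rightarrow> 'a::finite \<Rightarrow> 's \<Rightarrow> real) \<Rightarrow> ('s \<Rightarrow> 'a) \<Rightarrow> 's set \<Rightarrow> nat \<Rightarrow> 's \<Rightarrow> real" where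
  "reach_within P \<sigma> T 0 s = (if s \<in> T then 1 else 0)"
| "reach_within P \<sigma> T (Suc n) s =
     (if s \<in> T then 1 else (\<Sum>s'\<in>UNIV. P s (\<sigma> s) s' * reach_within P \<sigma> T n s'))"

definition reach_prob :: "('s::finite \<Rightarrow> 'a::finite \<Rightarrow> 's \<Rightarrow> real) \<Rightarrow> ('s \<Rightarrow> 'a) \<Rightarrow> 's set \<Rightarrow> 's \<Rightarrow> real" where
  "reach_prob P \<sigma> T s = (SUP n. reach_within P \<sigma> T n s)"

datatype opt = OMin | OMax

definition opt_real :: "opt \<Rightarrow> real set \<Rightarrow> real" where
  "opt_real o' X = (case o' of OMin \<Rightarrow> Inf X | OMax \<Rightarrow> Sup X)"

definition opt_enat :: "opt \<Rightarrow> enat set \<Rightarrow> enat" where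
  "opt_enat o' X = (case o' of OMin \<Rightarrow> Min X | OMax \<Rightarrow> Max X)"

definition reach_prob_opt :: "opt \<Rightarrow> ('s::finite \<Rightarrow> 'a::finite \<Rightarrow> 's \<Rightarrow> real) \<Rightarrow> 's set \<Rightarrow> 's \<Rightarrow> real" where
  "reach_prob_opt o' P T s = opt_real o' ((\<lambda>\<sigma>. reach_prob P \<sigma> T s) ` strategies P)"

definition Dtilde :: "opt \<Rightarrow> ('s::finite \<Rightarrow> 'a::finite \<Rightarrow> 's \<Rightarrow> real) \<Rightarrow> 's set \<Rightarrow> ('s \<Rightarrow> enat) \<Rightarrow> ('s \<Rightarrow> enat)" where
  "Dtilde o' P T r s =
     (if s \<in> T then \<infinity>
      else opt_enat o' ((\<lambda>a. Min (r ` Post P s a)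
              + (if \<exists>u\<in>Post P s a. \<exists>v\<in>Post P s a. r u \<noteq> r v then 1 else 0)) ` Act P s))"

end

theory Submission
  imports Defs
begin

(* Let r be the least fixed point of D~. If a strategy reaches T almost surely from s but r s is
   finite, the states of minimal r-value among those reachable from s form a trap avoiding T,
   because D~ keeps a value only when all successors share it; yet almost-sure reachability
   propagates along edges. Conversely, on A = {r = \<infinity>} every state can reach T inside A, under
   every strategy for min and under a positive-attractor strategy for max: otherwise lowering r to
   a finite constant on the remaining states of A would give a smaller pre-fixed point. In a finite
   Markov chain this forces almost-sure reachability on A, as the minimal reachability probability
   over A would propagate along a path into T. *)

lemma mdp_nonneg: "is_mdp P \<Longrightarrow> 0 \<le> P s a v"
  by (simp add: is_mdp_def)

lemma Act_nonempty: "is_mdp P \<Longrightarrow> Act P s \<noteq> {}"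
  by (simp add: is_mdp_def)

lemma sum_Act: "a \<in> Act P s \<Longrightarrow> (\<Sum>v\<in>UNIV. P s a v) = 1"
  by (simp add: Act_def)

lemma Post_nonempty:
  assumes "is_mdp P" "a \<in> Act P s"
  shows "Post P s a \<noteq> {}"
proof
  assume "Post P s a = {}"
  then have "P s a v = 0" for v
    using mdp_nonneg[OF assms(1), of s a v] unfolding Post_def by (metis empty_Collect_eq order_less_le)
  then show False
    using sum_Act[OF assms(2)] by simp
qed

lemma strategy_choice:
  assumes "\<And>u. \<exists>a\<in>Act P u. Q u a"
  shows "\<exists>\<sigma>\<in>strategies P. \<forall>u. Q u (\<sigma> u)"
proof -
  obtain \<sigma> where "\<forall>u. \<sigma> u \<in> Act P u \<and> Q u (\<sigma> u)"
    using assms by metis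
  then show ?thesis
    by (auto simp: strategies_def)
qed

lemma opt_enat_mono:
  assumes "finite I" "I \<noteq> {}" "\<And>i. i \<in> I \<Longrightarrow> f i \<le> g i"
  shows "opt_enat o' (f ` I) \<le> opt_enat o' (g ` I)"
proof (cases o')
  case OMin
  then show ?thesis
    using assms by (simp add: opt_enat_def) (meson Min_le finite_imageI imageI order_trans)
next
  case OMax
  then show ?thesis
    using assms by (simp add: opt_enat_def) (meson Max_ge finite_imageI imageI order_trans)
qed

lemma opt_enat_in: "finite X \<Longrightarrow> X \<noteq> {} \<Longrightarrow> opt_enat o' X \<in> X"
  by (cases o') (simp_all add: opt_enat_def)

lemma ex_greater_Min_image:
  fixes r :: "'s \<Rightarrow> 'b::linorder"
  assumes "finite X" "u \<in> X" "v \<in> X" "r u \<noteq> r v"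
  shows "\<exists>w\<in>X. Min (r ` X) < r w"
proof -
  have "Min (r ` X) \<le> r u" "Min (r ` X) \<le> r v"
    using assms by simp_all
  then show ?thesis
    using assms(2-4) by (metis order.not_eq_order_implies_strict)
qed

definition Dtilde_act :: "('s::finite \<Rightarrow> 'a::finite \<Rightarrow> 's \<Rightarrow> real) \<Rightarrow> ('s \<Rightarrow> enat) \<Rightarrow> 's \<Rightarrow> 'a \<Rightarrow> enat" where
  "Dtilde_act P r s a = Min (r ` Post P s a)
      + (if \<exists>u\<in>Post P s a. \<exists>v\<in>Post P s a. r u \<noteq> r v then 1 else 0)"

lemma Dtilde_eq:
  "Dtilde o' P T r s = (if s \<in> T then \<infinity> else opt_enat o' (Dtilde_act P r s ` Act P s))"
  by (simp add: Dtilde_def Dtilde_act_def)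

lemma Dtilde_act_const:
  assumes "Post P s a \<noteq> {}" "\<forall>v\<in>Post P s a. r v = c"
  shows "Dtilde_act P r s a = c"
proof -
  have "r ` Post P s a = {c}"
    using assms by auto
  then show ?thesis
    using assms by (simp add: Dtilde_act_def)
qed

lemma Dtilde_act_le_Suc:
  assumes "v \<in> Post P s a"
  shows "Dtilde_act P r s a \<le> r v + 1"
  unfolding Dtilde_act_def
proof (rule add_mono)
  show "Min (r ` Post P s a) \<le> r v"
    using assms by simp
qed simp

lemma Dtilde_act_nonconst:
  assumes "\<exists>u\<in>Post P s a. \<exists>v\<in>Post P s a. r u \<noteq> r v"
  shows "Dtilde_act P r s a = Min (r ` Post P s a) + 1"
  using assms by (simp add: Dtilde_act_def)

lemma Dtilde_act_infinity:
  assumes "Dtilde_act P r s a = \<infinity>" "v \<in> Post P s a"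
  shows "r v = \<infinity>"
proof -
  have "(if b then 1 else 0 :: enat) \<noteq> \<infinity>" for b
    by (simp add: one_enat_def zero_enat_def)
  then have "Min (r ` Post P s a) = \<infinity>"
    using assms(1) unfolding Dtilde_act_def plus_eq_infty_iff_enat by blast
  moreover have "Min (r ` Post P s a) \<le> r v"
    using assms(2) by simp
  ultimately show ?thesis
    by simp
qed

lemma Dtilde_act_mono:
  assumes "is_mdp P" "a \<in> Act P s" and le: "r \<le> r'"
  shows "Dtilde_act P r s a \<le> Dtilde_act P r' s a"
proof -
  let ?X = "Post P s a"
  have X: "finite ?X" "?X \<noteq> {}"
    using Post_nonempty[OF assms(1,2)] by auto
  have Min_le: "Min (r ` ?X) \<le> Min (r' ` ?X)"
    using X le by (simp add: le_fun_def) (meson Min_le finite finite_imageI imageI order_trans)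
  show ?thesis
  proof (cases "\<exists>u\<in>?X. \<exists>v\<in>?X. r' u \<noteq> r' v")
    case True
    then show ?thesis
      unfolding Dtilde_act_def using Min_le by (intro add_mono) simp_all
  next
    case False
    then obtain c where c: "\<forall>v\<in>?X. r' v = c"
      using X by blast
    have "r' ` ?X = {c}"
      using X(2) c by auto
    then have Min_r': "Min (r' ` ?X) = c"
      by simp
    have "Dtilde_act P r s a \<le> c"
    proof (cases "\<exists>u\<in>?X. \<exists>v\<in>?X. r u \<noteq> r v")
      case True
      then obtain w where w: "w \<in> ?X" "Min (r ` ?X) < r w"
        using X ex_greater_Min_image by meson
      have "r w \<le> c"
        using le c w(1) by (auto simp: le_fun_def)
      with w(2) have "Min (r ` ?X) < c"
        by (rule order_less_le_trans)
      then have "Min (r ` ?X) + 1 \<le> c"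
        by (simp only: eSuc_plus_1[symmetric]) (rule ileI1)
      then show ?thesis
        using Dtilde_act_nonconst[OF True] by simp
    next
      case False
      then obtain c' where c': "\<forall>v\<in>?X. r v = c'"
        using X by blast
      then have "r ` ?X = {c'}"
        using X(2) by auto
      then show ?thesis
        using Dtilde_act_const[OF X(2) c'] Min_le Min_r' by simp
    qed
    then show ?thesis
      using Dtilde_act_const[OF X(2) c] by simp
  qed
qed

lemma Dtilde_act_le_lower_bound:
  assumes "Post P s a \<noteq> {}" and ge: "\<forall>v\<in>Post P s a. m \<le> r v"
    and le: "Dtilde_act P r s a \<le> m" and "m \<noteq> \<infinity>"
  shows "\<forall>v\<in>Post P s a. r v = m"
proof (cases "\<exists>u\<in>Post P s a. \<exists>v\<in>Post P s a. r u \<noteq> r v")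
  case True
  let ?M = "Min (r ` Post P s a)"
  have "m \<le> ?M"
    using assms(1) ge by simp
  moreover have "?M + 1 \<le> m"
    using le Dtilde_act_nonconst[OF True] by simp
  ultimately have False
    using \<open>m \<noteq> \<infinity>\<close> by (cases m; cases ?M) (simp_all add: one_enat_def)
  then show ?thesis ..
next
  case False
  then obtain c where c: "\<forall>v\<in>Post P s a. r v = c"
    using assms(1) by blast
  then show ?thesis
    using assms(1) ge le Dtilde_act_const[OF assms(1) c] by (metis all_not_in_conv order_antisym)
qed

lemma mono_Dtilde:
  fixes P :: "'s::finite \<Rightarrow> 'a::finite \<Rightarrow> 's \<Rightarrow> real"
  assumes "is_mdp P"
  shows "mono (Dtilde o' P T)"
proof (intro monoI le_funI)
  fix r r' :: "'s \<Rightarrow> enat" and s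
  assume "r \<le> r'"
  then show "Dtilde o' P T r s \<le> Dtilde o' P T r' s"
    using assms by (simp add: Dtilde_eq Act_nonempty opt_enat_mono Dtilde_act_mono)
qed

lemma weighted_sum_eq_lower_bound:
  fixes p h :: "'x::finite \<Rightarrow> real"
  assumes "\<forall>w. 0 \<le> p w" "(\<Sum>w\<in>UNIV. p w) = 1" "(\<Sum>w\<in>UNIV. p w * h w) = m"
    and "\<forall>w. 0 < p w \<longrightarrow> m \<le> h w" and "0 < p v"
  shows "h v = m"
proof -
  have "(\<Sum>w\<in>UNIV. p w * (h w - m)) = 0"
    using assms(2,3) by (simp add: right_diff_distrib sum_subtractf sum_distrib_right[symmetric])
  moreover have "\<forall>w\<in>UNIV. 0 \<le> p w * (h w - m)"
    using assms(1,4) by (metis diff_ge_0_iff_ge less_eq_real_def mult_eq_0_iff mult_nonneg_nonneg)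
  ultimately have "p v * (h v - m) = 0"
    by (simp add: sum_nonneg_eq_0_iff)
  then show ?thesis
    using assms(5) by simp
qed

lemma reach_within_bounds:
  assumes "is_mdp P" "\<sigma> \<in> strategies P"
  shows "0 \<le> reach_within P \<sigma> T n u \<and> reach_within P \<sigma> T n u \<le> 1"
proof (induction n arbitrary: u)
  case 0
  show ?case by simp
next
  case (Suc n)
  have "(\<Sum>v\<in>UNIV. P u (\<sigma> u) v * reach_within P \<sigma> T n v) \<le> (\<Sum>v\<in>UNIV. P u (\<sigma> u) v)"
    using Suc mdp_nonneg[OF assms(1)] by (intro sum_mono mult_right_le_one_le) auto
  moreover have "0 \<le> (\<Sum>v\<in>UNIV. P u (\<sigma> u) v * reach_within P \<sigma> T n v)"
    using Suc mdp_nonneg[OF assms(1)] by (intro sum_nonneg) simp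
  ultimately show ?case
    using assms(2) by (simp add: strategies_def sum_Act)
qed

lemma reach_within_Suc_mono:
  assumes "is_mdp P"
  shows "reach_within P \<sigma> T n u \<le> reach_within P \<sigma> T (Suc n) u"
proof (induction n arbitrary: u)
  case 0
  show ?case
    using mdp_nonneg[OF assms] by (simp add: sum_nonneg)
next
  case (Suc n)
  then show ?case
    using mdp_nonneg[OF assms] by (simp add: sum_mono mult_left_mono)
qed

lemma reach_within_tendsto:
  assumes "is_mdp P" "\<sigma> \<in> strategies P"
  shows "(\<lambda>n. reach_within P \<sigma> T n u) \<longlonglongrightarrow> reach_prob P \<sigma> T u"
  unfolding reach_prob_def
proof (rule LIMSEQ_incseq_SUP)
  show "bdd_above (range (\<lambda>n. reach_within P \<sigma> T n u))"
    using reach_within_bounds[OF assms] by (intro bdd_aboveI[of _ 1]) auto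
  show "incseq (\<lambda>n. reach_within P \<sigma> T n u)"
    using reach_within_Suc_mono[OF assms(1)] by (rule incseq_SucI)
qed

lemma reach_prob_bounds:
  assumes "is_mdp P" "\<sigma> \<in> strategies P"
  shows "0 \<le> reach_prob P \<sigma> T u" "reach_prob P \<sigma> T u \<le> 1"
  using reach_within_bounds[OF assms]
  by (auto intro: LIMSEQ_le_const[OF reach_within_tendsto[OF assms]]
                  LIMSEQ_le_const2[OF reach_within_tendsto[OF assms]])

lemma reach_prob_target: "u \<in> T \<Longrightarrow> reach_prob P \<sigma> T u = 1"
proof -
  assume "u \<in> T"
  then have "reach_within P \<sigma> T n u = 1" for n
    by (cases n) auto
  then show ?thesis
    by (simp add: reach_prob_def)
qed

lemma reach_prob_unfold:
  assumes "is_mdp P" "\<sigma> \<in> strategies P" "u \<notin> T"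
  shows "reach_prob P \<sigma> T u = (\<Sum>v\<in>UNIV. P u (\<sigma> u) v * reach_prob P \<sigma> T v)"
proof (rule LIMSEQ_unique)
  show "(\<lambda>n. reach_within P \<sigma> T (Suc n) u) \<longlonglongrightarrow> reach_prob P \<sigma> T u"
    using LIMSEQ_Suc[OF reach_within_tendsto[OF assms(1,2)]] .
  show "(\<lambda>n. reach_within P \<sigma> T (Suc n) u)
      \<longlonglongrightarrow> (\<Sum>v\<in>UNIV. P u (\<sigma> u) v * reach_prob P \<sigma> T v)"
    using assms(3) by (simp add: tendsto_sum tendsto_mult_left reach_within_tendsto[OF assms(1,2)])
qed

(* T is absorbing in reach_within, so its states get no outgoing edges. *)
definition strat_edges :: "('s::finite \<Rightarrow> 'a::finite \<Rightarrow> 's \<Rightarrow> real) \<Rightarrow> ('s \<Rightarrow> 'a) \<Rightarrow> 's set \<Rightarrow> ('s \<times> 's) set" where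
  "strat_edges P \<sigma> T = {(u, v). u \<notin> T \<and> 0 < P u (\<sigma> u) v}"

lemma reach_prob_eq_1_successor:
  assumes mdp: "is_mdp P" and \<sigma>: "\<sigma> \<in> strategies P" and "(u, v) \<in> strat_edges P \<sigma> T"
    and one: "reach_prob P \<sigma> T u = 1"
  shows "reach_prob P \<sigma> T v = 1"
proof -
  have u: "u \<notin> T" "0 < P u (\<sigma> u) v"
    using assms(3) by (auto simp: strat_edges_def)
  \<comment> \<open>reach_prob is at most 1 and averages to 1 over the successors of u\<close>
  have "- reach_prob P \<sigma> T v = - 1"
  proof (rule weighted_sum_eq_lower_bound[where p = "P u (\<sigma> u)"])
    show "(\<Sum>w\<in>UNIV. P u (\<sigma> u) w * - reach_prob P \<sigma> T w) = - 1"
      using reach_prob_unfold[OF mdp \<sigma> u(1)] one by (simp add: sum_negf)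
  qed (use u mdp_nonneg[OF mdp] reach_prob_bounds[OF mdp \<sigma>] \<sigma> in \<open>auto simp: strategies_def sum_Act\<close>)
  then show ?thesis
    by simp
qed

lemma reach_prob_eq_1_rtrancl:
  assumes "is_mdp P" "\<sigma> \<in> strategies P" "reach_prob P \<sigma> T s = 1"
    and "(s, v) \<in> (strat_edges P \<sigma> T)\<^sup>*"
  shows "reach_prob P \<sigma> T v = 1"
  using assms(4,3) by (induction rule: rtrancl_induct) (auto intro: reach_prob_eq_1_successor[OF assms(1,2)])

lemma reach_prob_trap:
  assumes mdp: "is_mdp P" and trap: "\<forall>u\<in>C. u \<notin> T \<and> (\<forall>v. 0 < P u (\<sigma> u) v \<longrightarrow> v \<in> C)"
    and "u \<in> C"
  shows "reach_prob P \<sigma> T u = 0"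
proof -
  have "reach_within P \<sigma> T n u = 0" if "u \<in> C" for n u
    using that
  proof (induction n arbitrary: u)
    case 0
    then show ?case
      using trap by simp
  next
    case (Suc n)
    have "\<forall>v\<in>UNIV. P u (\<sigma> u) v * reach_within P \<sigma> T n v = 0"
      using Suc trap mdp_nonneg[OF mdp, of u "\<sigma> u"] by (metis UNIV_I less_eq_real_def mult_eq_0_iff)
    then have "(\<Sum>v\<in>UNIV. P u (\<sigma> u) v * reach_within P \<sigma> T n v) = 0"
      by (rule sum.neutral)
    then show ?case
      using Suc.prems trap by simp
  qed
  then show ?thesis
    using assms(3) by (simp add: reach_prob_def)
qed

lemma reach_prob_eq_1_if_reaches_target:
  assumes mdp: "is_mdp P" and \<sigma>: "\<sigma> \<in> strategies P"
    and closed: "\<forall>u\<in>G. u \<notin> T \<longrightarrow> (\<forall>v. 0 < P u (\<sigma> u) v \<longrightarrow> v \<in> G)"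
    and reaches: "\<forall>u\<in>G. \<exists>t\<in>T. (u, t) \<in> (strat_edges P \<sigma> T)\<^sup>*"
    and "u \<in> G"
  shows "reach_prob P \<sigma> T u = 1"
proof (rule ccontr)
  let ?h = "reach_prob P \<sigma> T"
  assume "?h u \<noteq> 1"
  define m where "m = Min (?h ` G)"
  have "m \<le> ?h u"
    using \<open>u \<in> G\<close> by (simp add: m_def)
  then have "m < 1"
    using \<open>?h u \<noteq> 1\<close> reach_prob_bounds[OF mdp \<sigma>, of T u] by simp
  have "m \<in> ?h ` G"
    unfolding m_def using \<open>u \<in> G\<close> by (intro Min_in) auto
  then obtain u0 where u0: "u0 \<in> G" "?h u0 = m"
    by auto
  define M where "M = {v\<in>G. ?h v = m}"
  have M_closed: "v \<in> M" if "w \<in> M" "(w, v) \<in> strat_edges P \<sigma> T" for w v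
  proof -
    have w: "w \<in> G" "w \<notin> T" "0 < P w (\<sigma> w) v" "?h w = m"
      using that by (auto simp: M_def strat_edges_def)
    have "?h v = m"
    proof (rule weighted_sum_eq_lower_bound[where p = "P w (\<sigma> w)"])
      show "(\<Sum>x\<in>UNIV. P w (\<sigma> w) x * ?h x) = m"
        using reach_prob_unfold[OF mdp \<sigma> w(2)] w(4) by simp
      show "\<forall>x. 0 < P w (\<sigma> w) x \<longrightarrow> m \<le> ?h x"
        using closed w(1,2) by (auto simp: m_def)
    qed (use w mdp_nonneg[OF mdp] \<sigma> in \<open>auto simp: strategies_def sum_Act\<close>)
    then show ?thesis
      using closed w by (auto simp: M_def)
  qed
  obtain t where "t \<in> T" and path: "(u0, t) \<in> (strat_edges P \<sigma> T)\<^sup>*"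
    using reaches u0(1) by blast
  have "u0 \<in> M"
    using u0 by (simp add: M_def)
  with path have "t \<in> M"
    by (induction rule: rtrancl_induct) (auto intro: M_closed)
  then show False
    using \<open>t \<in> T\<close> \<open>m < 1\<close> by (simp add: M_def reach_prob_target)
qed

lemma Dtilde_argmin_trap:
  assumes mdp: "is_mdp P" and \<sigma>: "\<sigma> \<in> strategies P"
    and target: "\<forall>t\<in>T. r t = \<infinity>"
    and step: "\<forall>u. u \<notin> T \<longrightarrow> Dtilde_act P r u (\<sigma> u) \<le> r u"
    and closed: "\<forall>u\<in>R. u \<notin> T \<longrightarrow> Post P u (\<sigma> u) \<subseteq> R"
    and min: "\<forall>v\<in>R. m \<le> r v" and "m \<noteq> \<infinity>"
  shows "\<forall>u\<in>{v\<in>R. r v = m}. u \<notin> T \<and> (\<forall>v. 0 < P u (\<sigma> u) v \<longrightarrow> v \<in> {v\<in>R. r v = m})"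
proof
  fix u
  assume "u \<in> {v\<in>R. r v = m}"
  then have u: "u \<in> R" "r u = m" "u \<notin> T"
    using target \<open>m \<noteq> \<infinity>\<close> by auto
  have "\<forall>v\<in>Post P u (\<sigma> u). r v = m"
  proof (rule Dtilde_act_le_lower_bound)
    show "Post P u (\<sigma> u) \<noteq> {}"
      using Post_nonempty[OF mdp] \<sigma> by (simp add: strategies_def)
    show "\<forall>v\<in>Post P u (\<sigma> u). m \<le> r v"
      using closed min u by blast
    show "Dtilde_act P r u (\<sigma> u) \<le> m"
      using spec[OF step, of u] u by simp
  qed (rule \<open>m \<noteq> \<infinity>\<close>)
  then show "u \<notin> T \<and> (\<forall>v. 0 < P u (\<sigma> u) v \<longrightarrow> v \<in> {v\<in>R. r v = m})"
    using u closed by (auto simp: Post_def)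
qed

lemma infinite_if_reach_prob_eq_1:
  assumes mdp: "is_mdp P" and \<sigma>: "\<sigma> \<in> strategies P"
    and target: "\<forall>t\<in>T. r t = \<infinity>"
    and step: "\<forall>u. u \<notin> T \<longrightarrow> Dtilde_act P r u (\<sigma> u) \<le> r u"
    and one: "reach_prob P \<sigma> T s = 1"
  shows "r s = \<infinity>"
proof (rule ccontr)
  assume "r s \<noteq> \<infinity>"
  define R where "R = {v. (s, v) \<in> (strat_edges P \<sigma> T)\<^sup>*}"
  define m where "m = Min (r ` R)"
  have "s \<in> R"
    by (simp add: R_def)
  then have "m \<le> r s"
    by (simp add: m_def)
  then have "m \<noteq> \<infinity>"
    using \<open>r s \<noteq> \<infinity>\<close> by (cases m) auto
  have "m \<in> r ` R"
    unfolding m_def using \<open>s \<in> R\<close> by (intro Min_in) auto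
  then obtain u0 where u0: "u0 \<in> R" "r u0 = m"
    by auto
  have "\<forall>u\<in>R. u \<notin> T \<longrightarrow> Post P u (\<sigma> u) \<subseteq> R"
    by (auto simp: R_def Post_def strat_edges_def intro: rtrancl_into_rtrancl)
  moreover have "\<forall>v\<in>R. m \<le> r v"
    by (simp add: m_def)
  ultimately have "reach_prob P \<sigma> T u0 = 0"
    using u0 by (intro reach_prob_trap[OF mdp Dtilde_argmin_trap[OF mdp \<sigma> target step]]) (simp_all add: \<open>m \<noteq> \<infinity>\<close>)
  moreover have "reach_prob P \<sigma> T u0 = 1"
    using reach_prob_eq_1_rtrancl[OF mdp \<sigma> one] u0(1) by (simp add: R_def)
  ultimately show False
    by simp
qed

lemma lfp_Dtilde_target:
  assumes "is_mdp P" "u \<in> T"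
  shows "lfp (Dtilde o' P T) u = \<infinity>"
proof -
  have "lfp (Dtilde o' P T) u = Dtilde o' P T (lfp (Dtilde o' P T)) u"
    by (rule fun_cong[OF lfp_unfold[OF mono_Dtilde[OF assms(1)]]])
  then show ?thesis
    using assms(2) by (simp add: Dtilde_eq)
qed

lemma lfp_Dtilde_nontarget:
  assumes "is_mdp P" "u \<notin> T"
  shows "lfp (Dtilde o' P T) u = opt_enat o' (Dtilde_act P (lfp (Dtilde o' P T)) u ` Act P u)"
proof -
  have "lfp (Dtilde o' P T) u = Dtilde o' P T (lfp (Dtilde o' P T)) u"
    by (rule fun_cong[OF lfp_unfold[OF mono_Dtilde[OF assms(1)]]])
  then show ?thesis
    using assms(2) by (simp only: Dtilde_eq if_False)
qed

lemma lfp_Dtilde_OMin_le_act: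
  assumes "is_mdp P" "u \<notin> T" "a \<in> Act P u"
  shows "lfp (Dtilde OMin P T) u \<le> Dtilde_act P (lfp (Dtilde OMin P T)) u a"
  using lfp_Dtilde_nontarget[OF assms(1,2), of OMin] assms(3) by (simp add: opt_enat_def)

lemma lfp_Dtilde_OMax_ge_act:
  assumes "is_mdp P" "u \<notin> T" "a \<in> Act P u"
  shows "Dtilde_act P (lfp (Dtilde OMax P T)) u a \<le> lfp (Dtilde OMax P T) u"
  using lfp_Dtilde_nontarget[OF assms(1,2), of OMax] assms(3) by (simp add: opt_enat_def)

lemma lfp_Dtilde_attaining_strategy:
  assumes mdp: "is_mdp P"
  shows "\<exists>\<sigma>\<in>strategies P. \<forall>u. u \<notin> T \<longrightarrow>
           Dtilde_act P (lfp (Dtilde o' P T)) u (\<sigma> u) = lfp (Dtilde o' P T) u"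
proof (rule strategy_choice)
  fix u
  show "\<exists>a\<in>Act P u. u \<notin> T \<longrightarrow> Dtilde_act P (lfp (Dtilde o' P T)) u a = lfp (Dtilde o' P T) u"
  proof (cases "u \<in> T")
    case True
    then show ?thesis
      using Act_nonempty[OF mdp] by blast
  next
    case False
    have "opt_enat o' (Dtilde_act P (lfp (Dtilde o' P T)) u ` Act P u)
        \<in> Dtilde_act P (lfp (Dtilde o' P T)) u ` Act P u"
      using Act_nonempty[OF mdp] by (intro opt_enat_in) auto
    then show ?thesis
      using lfp_Dtilde_nontarget[OF mdp False, of o'] by auto
  qed
qed

(* Leastness: r patched to the finite value c on B would be a smaller pre-fixed point. *)
lemma lfp_Dtilde_patch_empty:
  fixes P :: "'s::finite \<Rightarrow> 'a::finite \<Rightarrow> 's \<Rightarrow> real" and T :: "'s set" and o' :: opt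
  defines "r \<equiv> lfp (Dtilde o' P T)"
  assumes mdp: "is_mdp P" and "c \<noteq> \<infinity>" and infinite: "\<forall>u\<in>B. r u = \<infinity>"
    and below: "\<forall>u\<in>B. Dtilde o' P T (\<lambda>v. if v \<in> B then c else r v) u \<le> c"
  shows "B = {}"
proof -
  define r' where "r' = (\<lambda>v. if v \<in> B then c else r v)"
  have "r' \<le> r"
    using infinite by (simp add: r'_def le_fun_def)
  then have "Dtilde o' P T r' \<le> Dtilde o' P T r"
    by (rule monoD[OF mono_Dtilde[OF mdp]])
  also have "\<dots> = r"
    unfolding r_def by (rule lfp_fixpoint[OF mono_Dtilde[OF mdp]])
  finally have "Dtilde o' P T r' \<le> r'"
    using below by (auto simp: le_fun_def r'_def)
  then have "r \<le> r'"
    unfolding r_def by (rule lfp_lowerbound)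
  show ?thesis
  proof (rule ccontr)
    assume "B \<noteq> {}"
    then obtain u where "u \<in> B"
      by blast
    then have "\<infinity> \<le> c"
      using le_funD[OF \<open>r \<le> r'\<close>, of u] infinite by (simp add: r'_def)
    then show False
      using \<open>c \<noteq> \<infinity>\<close> by simp
  qed
qed

lemma lfp_Dtilde_OMin_infinite_successor:
  assumes mdp: "is_mdp P" and \<sigma>: "\<sigma> \<in> strategies P"
    and "lfp (Dtilde OMin P T) u = \<infinity>" "u \<notin> T" "0 < P u (\<sigma> u) v"
  shows "lfp (Dtilde OMin P T) v = \<infinity>"
proof -
  have "Dtilde_act P (lfp (Dtilde OMin P T)) u (\<sigma> u) = \<infinity>"
    using lfp_Dtilde_OMin_le_act[OF mdp assms(4), of "\<sigma> u"] \<sigma> assms(3)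
    by (simp add: strategies_def)
  then show ?thesis
    by (rule Dtilde_act_infinity) (simp add: Post_def assms(5))
qed

lemma lfp_Dtilde_OMin_infinite_reaches_target:
  assumes mdp: "is_mdp P" and \<sigma>: "\<sigma> \<in> strategies P"
    and "lfp (Dtilde OMin P T) s = \<infinity>"
  shows "\<exists>t\<in>T. (s, t) \<in> (strat_edges P \<sigma> T)\<^sup>*"
proof -
  define r where "r = lfp (Dtilde OMin P T)"
  define B where "B = {u. r u = \<infinity> \<and> \<not> (\<exists>t\<in>T. (u, t) \<in> (strat_edges P \<sigma> T)\<^sup>*)}"
  have "B = {}"
  proof (rule lfp_Dtilde_patch_empty[OF mdp, where o' = OMin and T = T and c = 0, folded r_def])
    let ?r' = "\<lambda>v. if v \<in> B then 0 else r v"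
    show "\<forall>u\<in>B. Dtilde OMin P T ?r' u \<le> 0"
    proof
      fix u
      assume u: "u \<in> B"
      then have "u \<notin> T"
        by (auto simp: B_def)
      have "v \<in> B" if "v \<in> Post P u (\<sigma> u)" for v
      proof -
        have edge: "(u, v) \<in> strat_edges P \<sigma> T"
          using that \<open>u \<notin> T\<close> by (simp add: strat_edges_def Post_def)
        have "r v = \<infinity>"
          using lfp_Dtilde_OMin_infinite_successor[OF mdp \<sigma> _ \<open>u \<notin> T\<close>, of v] u that
          by (simp add: B_def Post_def r_def)
        moreover have "\<not> (\<exists>t\<in>T. (v, t) \<in> (strat_edges P \<sigma> T)\<^sup>*)"
          using u edge by (auto simp: B_def intro: converse_rtrancl_into_rtrancl)
        ultimately show ?thesis
          by (simp add: B_def)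
      qed
      then have "Dtilde_act P ?r' u (\<sigma> u) = 0"
        using Post_nonempty[OF mdp] \<sigma> by (intro Dtilde_act_const) (auto simp: strategies_def)
      moreover have "Dtilde OMin P T ?r' u \<le> Dtilde_act P ?r' u (\<sigma> u)"
        using \<open>u \<notin> T\<close> \<sigma> by (simp add: Dtilde_eq opt_enat_def strategies_def)
      ultimately show "Dtilde OMin P T ?r' u \<le> 0"
        by simp
    qed
  qed (simp_all add: B_def)
  then show ?thesis
    using assms(3) unfolding B_def r_def by blast
qed

lemma lfp_Dtilde_OMin_infinite_imp_reach_prob_eq_1:
  assumes mdp: "is_mdp P" and \<sigma>: "\<sigma> \<in> strategies P"
    and "lfp (Dtilde OMin P T) s = \<infinity>"
  shows "reach_prob P \<sigma> T s = 1"
proof (rule reach_prob_eq_1_if_reaches_target[OF mdp \<sigma>, where G = "{u. lfp (Dtilde OMin P T) u = \<infinity>}"])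
  show "\<forall>u\<in>{u. lfp (Dtilde OMin P T) u = \<infinity>}. u \<notin> T \<longrightarrow> (\<forall>v. 0 < P u (\<sigma> u) v \<longrightarrow>
      v \<in> {u. lfp (Dtilde OMin P T) u = \<infinity>})"
    using lfp_Dtilde_OMin_infinite_successor[OF mdp \<sigma>] by blast
  show "\<forall>u\<in>{u. lfp (Dtilde OMin P T) u = \<infinity>}. \<exists>t\<in>T. (u, t) \<in> (strat_edges P \<sigma> T)\<^sup>*"
    using lfp_Dtilde_OMin_infinite_reaches_target[OF mdp \<sigma>] by blast
qed (use assms(3) in simp)

lemma ex_bound_finite_values:
  fixes r :: "'s::finite \<Rightarrow> enat"
  shows "\<exists>n. \<forall>v. r v \<noteq> \<infinity> \<longrightarrow> r v + 1 \<le> enat n"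
proof (intro exI allI impI)
  fix v
  assume "r v \<noteq> \<infinity>"
  moreover have "the_enat (r v) \<le> Max (range (the_enat \<circ> r))"
    by (rule Max_ge) auto
  ultimately show "r v + 1 \<le> enat (Suc (Max (range (the_enat \<circ> r))))"
    by (cases "r v") (simp_all add: one_enat_def)
qed

fun pos_attractor :: "('s::finite \<Rightarrow> 'a::finite \<Rightarrow> 's \<Rightarrow> real) \<Rightarrow> 's set \<Rightarrow> 's set \<Rightarrow> nat \<Rightarrow> 's set" where
  "pos_attractor P A T 0 = T"
| "pos_attractor P A T (Suc k) = pos_attractor P A T k
     \<union> {u\<in>A. \<exists>a\<in>Act P u. Post P u a \<subseteq> A \<and> Post P u a \<inter> pos_attractor P A T k \<noteq> {}}"

lemma pos_attractor_mono: "j \<le> k \<Longrightarrow> pos_attractor P A T j \<subseteq> pos_attractor P A T k"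
  by (rule lift_Suc_mono_le[of "pos_attractor P A T"]) auto

lemma Post_outside_pos_attractor:
  assumes "u \<in> A" "u \<notin> (\<Union>k. pos_attractor P A T k)"
    and "a \<in> Act P u" "Post P u a \<subseteq> A" "v \<in> Post P u a"
  shows "v \<notin> (\<Union>k. pos_attractor P A T k)"
proof
  assume "v \<in> (\<Union>k. pos_attractor P A T k)"
  then obtain k where "v \<in> pos_attractor P A T k"
    by blast
  then have "u \<in> pos_attractor P A T (Suc k)"
    using assms(1,3-5) by auto
  with assms(2) show False
    by blast
qed

lemma pos_attractor_reaches_target:
  assumes progress: "\<forall>u k. u \<notin> T \<and> u \<in> pos_attractor P A T (Suc k) \<longrightarrow>
      (\<exists>v\<in>Post P u (\<sigma> u). v \<in> pos_attractor P A T k)"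
    and "u \<in> pos_attractor P A T k"
  shows "\<exists>t\<in>T. (u, t) \<in> (strat_edges P \<sigma> T)\<^sup>*"
  using assms(2)
proof (induction k arbitrary: u)
  case 0
  then show ?case
    by auto
next
  case (Suc k)
  show ?case
  proof (cases "u \<in> T")
    case False
    then obtain v where v: "v \<in> Post P u (\<sigma> u)" "v \<in> pos_attractor P A T k"
      using progress Suc.prems by blast
    then obtain t where "t \<in> T" "(v, t) \<in> (strat_edges P \<sigma> T)\<^sup>*"
      using Suc.IH by blast
    moreover have "(u, v) \<in> strat_edges P \<sigma> T"
      using False v(1) by (simp add: strat_edges_def Post_def)
    ultimately show ?thesis
      by (blast intro: converse_rtrancl_into_rtrancl)
  qed blast
qed

lemma pos_attractor_strategy:
  assumes mdp: "is_mdp P"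
  shows "\<exists>\<sigma>\<in>strategies P. \<forall>u. u \<notin> T \<and> u \<in> (\<Union>k. pos_attractor P A T k) \<longrightarrow>
           Post P u (\<sigma> u) \<subseteq> A \<and>
           (\<forall>k. u \<in> pos_attractor P A T (Suc k) \<longrightarrow> (\<exists>v\<in>Post P u (\<sigma> u). v \<in> pos_attractor P A T k))"
proof (rule strategy_choice)
  fix u
  show "\<exists>a\<in>Act P u. u \<notin> T \<and> u \<in> (\<Union>k. pos_attractor P A T k) \<longrightarrow>
          Post P u a \<subseteq> A \<and>
          (\<forall>k. u \<in> pos_attractor P A T (Suc k) \<longrightarrow> (\<exists>v\<in>Post P u a. v \<in> pos_attractor P A T k))"
  proof (cases "u \<notin> T \<and> u \<in> (\<Union>k. pos_attractor P A T k)")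
    case True
    then obtain k where "u \<in> pos_attractor P A T (Suc k)"
      by (metis UN_E not0_implies_Suc pos_attractor.simps(1))
    define j where "j = (LEAST k. u \<in> pos_attractor P A T (Suc k))"
    have j: "u \<in> pos_attractor P A T (Suc j)"
      unfolding j_def by (rule LeastI) fact
    have "u \<notin> pos_attractor P A T j"
    proof
      assume "u \<in> pos_attractor P A T j"
      moreover obtain i where "j = Suc i"
        using True \<open>u \<in> pos_attractor P A T j\<close> by (cases j) auto
      ultimately have "u \<in> pos_attractor P A T (Suc i)"
        by (simp only:)
      then have "j \<le> i"
        unfolding j_def by (rule Least_le)
      with \<open>j = Suc i\<close> show False
        by simp
    qed
    then obtain a where a: "a \<in> Act P u" "Post P u a \<subseteq> A" "Post P u a \<inter> pos_attractor P A T j \<noteq> {}"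
      using j by auto
    have "\<exists>v\<in>Post P u a. v \<in> pos_attractor P A T k" if "u \<in> pos_attractor P A T (Suc k)" for k
    proof -
      have "j \<le> k"
        unfolding j_def using that by (rule Least_le)
      then show ?thesis
        using a(3) pos_attractor_mono by blast
    qed
    then show ?thesis
      using a by blast
  next
    case False
    then show ?thesis
      using Act_nonempty[OF mdp] by blast
  qed
qed

lemma lfp_Dtilde_OMax_infinite_in_pos_attractor:
  fixes P :: "'s::finite \<Rightarrow> 'a::finite \<Rightarrow> 's \<Rightarrow> real" and T :: "'s set"
  defines "A \<equiv> {u. lfp (Dtilde OMax P T) u = \<infinity>}"
  assumes mdp: "is_mdp P"
  shows "A \<subseteq> (\<Union>k. pos_attractor P A T k)"
proof -
  define r where "r = lfp (Dtilde OMax P T)"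
  define Attr where "Attr = (\<Union>k. pos_attractor P A T k)"
  obtain n where bound: "\<forall>v. r v \<noteq> \<infinity> \<longrightarrow> r v + 1 \<le> enat n"
    using ex_bound_finite_values by blast
  have "A - Attr = {}"
  proof (rule lfp_Dtilde_patch_empty[OF mdp, where o' = OMax and T = T and c = "enat n", folded r_def])
    let ?r' = "\<lambda>v. if v \<in> A - Attr then enat n else r v"
    show "\<forall>u\<in>A - Attr. Dtilde OMax P T ?r' u \<le> enat n"
    proof
      fix u
      assume u: "u \<in> A - Attr"
      then have "u \<notin> T"
        unfolding Attr_def using pos_attractor.simps(1)[of P A T] by blast
      have "Dtilde_act P ?r' u a \<le> enat n" if a: "a \<in> Act P u" for a
      proof (cases "Post P u a \<subseteq> A")
        case True
        have "v \<in> A - Attr" if v: "v \<in> Post P u a" for v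
          using Post_outside_pos_attractor[OF _ _ a True v] True v u unfolding Attr_def by blast
        then have "\<forall>v\<in>Post P u a. v \<in> A - Attr"
          by blast
        then have "Dtilde_act P ?r' u a = enat n"
          using Post_nonempty[OF mdp a] by (intro Dtilde_act_const) auto
        then show ?thesis
          by simp
      next
        case False
        then obtain v where v: "v \<in> Post P u a" "v \<notin> A"
          by blast
        then have "Dtilde_act P ?r' u a \<le> r v + 1"
          using Dtilde_act_le_Suc[OF v(1), of ?r'] by simp
        also have "\<dots> \<le> enat n"
          using v(2) bound by (simp add: A_def r_def)
        finally show ?thesis .
      qed
      then show "Dtilde OMax P T ?r' u \<le> enat n"
        using \<open>u \<notin> T\<close> Act_nonempty[OF mdp] by (simp add: Dtilde_eq opt_enat_def)
    qed
  qed (auto simp: A_def r_def)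
  then show ?thesis
    by (auto simp: Attr_def)
qed

lemma lfp_Dtilde_OMax_infinite_imp_reach_prob_eq_1:
  assumes mdp: "is_mdp P" and "lfp (Dtilde OMax P T) s = \<infinity>"
  shows "\<exists>\<sigma>\<in>strategies P. reach_prob P \<sigma> T s = 1"
proof -
  define A where "A = {u. lfp (Dtilde OMax P T) u = \<infinity>}"
  have A_Attr: "A \<subseteq> (\<Union>k. pos_attractor P A T k)"
    unfolding A_def by (rule lfp_Dtilde_OMax_infinite_in_pos_attractor[OF mdp])
  obtain \<sigma> where \<sigma>: "\<sigma> \<in> strategies P" and attr: "\<forall>u. u \<notin> T \<and> u \<in> (\<Union>k. pos_attractor P A T k) \<longrightarrow>
      Post P u (\<sigma> u) \<subseteq> A \<and>
      (\<forall>k. u \<in> pos_attractor P A T (Suc k) \<longrightarrow> (\<exists>v\<in>Post P u (\<sigma> u). v \<in> pos_attractor P A T k))"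
    by (rule bexE[OF pos_attractor_strategy[OF mdp, of T A]])
  have "reach_prob P \<sigma> T s = 1"
  proof (rule reach_prob_eq_1_if_reaches_target[OF mdp \<sigma>, where G = A])
    show "\<forall>u\<in>A. u \<notin> T \<longrightarrow> (\<forall>v. 0 < P u (\<sigma> u) v \<longrightarrow> v \<in> A)"
    proof (intro ballI impI allI)
      fix u v
      assume "u \<in> A" "u \<notin> T" "0 < P u (\<sigma> u) v"
      moreover have "Post P u (\<sigma> u) \<subseteq> A"
        using attr A_Attr \<open>u \<in> A\<close> \<open>u \<notin> T\<close> by blast
      ultimately show "v \<in> A"
        by (auto simp: Post_def)
    qed
    have progress: "\<forall>u k. u \<notin> T \<and> u \<in> pos_attractor P A T (Suc k) \<longrightarrow>
        (\<exists>v\<in>Post P u (\<sigma> u). v \<in> pos_attractor P A T k)"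
      using attr by blast
    show "\<forall>u\<in>A. \<exists>t\<in>T. (u, t) \<in> (strat_edges P \<sigma> T)\<^sup>*"
    proof
      fix u
      assume "u \<in> A"
      then obtain k where "u \<in> pos_attractor P A T k"
        using A_Attr by blast
      then show "\<exists>t\<in>T. (u, t) \<in> (strat_edges P \<sigma> T)\<^sup>*"
        by (rule pos_attractor_reaches_target[OF progress])
    qed
  qed (use assms(2) in \<open>simp add: A_def\<close>)
  with \<sigma> show ?thesis
    by blast
qed

lemma lfp_Dtilde_OMin_infinite_iff:
  assumes mdp: "is_mdp P"
  shows "lfp (Dtilde OMin P T) s = \<infinity> \<longleftrightarrow> (\<forall>\<sigma>\<in>strategies P. reach_prob P \<sigma> T s = 1)"
proof
  assume "lfp (Dtilde OMin P T) s = \<infinity>"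
  then show "\<forall>\<sigma>\<in>strategies P. reach_prob P \<sigma> T s = 1"
    using lfp_Dtilde_OMin_infinite_imp_reach_prob_eq_1[OF mdp] by blast
next
  assume one: "\<forall>\<sigma>\<in>strategies P. reach_prob P \<sigma> T s = 1"
  obtain \<sigma> where \<sigma>: "\<sigma> \<in> strategies P" and attaining: "\<forall>u. u \<notin> T \<longrightarrow>
      Dtilde_act P (lfp (Dtilde OMin P T)) u (\<sigma> u) = lfp (Dtilde OMin P T) u"
    using lfp_Dtilde_attaining_strategy[OF mdp] by blast
  show "lfp (Dtilde OMin P T) s = \<infinity>"
  proof (rule infinite_if_reach_prob_eq_1[OF mdp \<sigma>])
    show "\<forall>t\<in>T. lfp (Dtilde OMin P T) t = \<infinity>"
      using lfp_Dtilde_target[OF mdp] by blast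
  qed (use attaining one \<sigma> in simp_all)
qed

lemma lfp_Dtilde_OMax_infinite_iff:
  assumes mdp: "is_mdp P"
  shows "lfp (Dtilde OMax P T) s = \<infinity> \<longleftrightarrow> (\<exists>\<sigma>\<in>strategies P. reach_prob P \<sigma> T s = 1)"
proof
  assume "lfp (Dtilde OMax P T) s = \<infinity>"
  then show "\<exists>\<sigma>\<in>strategies P. reach_prob P \<sigma> T s = 1"
    by (rule lfp_Dtilde_OMax_infinite_imp_reach_prob_eq_1[OF mdp])
next
  assume "\<exists>\<sigma>\<in>strategies P. reach_prob P \<sigma> T s = 1"
  then obtain \<sigma> where \<sigma>: "\<sigma> \<in> strategies P" and one: "reach_prob P \<sigma> T s = 1"
    by blast
  show "lfp (Dtilde OMax P T) s = \<infinity>"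
  proof (rule infinite_if_reach_prob_eq_1[OF mdp \<sigma> _ _ one])
    show "\<forall>t\<in>T. lfp (Dtilde OMax P T) t = \<infinity>"
      using lfp_Dtilde_target[OF mdp] by blast
    show "\<forall>u. u \<notin> T \<longrightarrow> Dtilde_act P (lfp (Dtilde OMax P T)) u (\<sigma> u) \<le> lfp (Dtilde OMax P T) u"
      using lfp_Dtilde_OMax_ge_act[OF mdp] \<sigma> by (simp add: strategies_def)
  qed
qed

lemma strategies_nonempty:
  assumes "is_mdp P"
  shows "strategies P \<noteq> {}"
proof -
  have "(\<lambda>u. SOME a. a \<in> Act P u) \<in> strategies P"
    using Act_nonempty[OF assms] by (simp add: strategies_def some_in_eq)
  then show ?thesis
    by blast
qed

lemma reach_prob_opt_OMin_eq_1_iff: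
  assumes mdp: "is_mdp P"
  shows "reach_prob_opt OMin P T s = 1 \<longleftrightarrow> (\<forall>\<sigma>\<in>strategies P. reach_prob P \<sigma> T s = 1)"
proof -
  let ?H = "(\<lambda>\<sigma>. reach_prob P \<sigma> T s) ` strategies P"
  have H: "finite ?H" "?H \<noteq> {}"
    using strategies_nonempty[OF mdp] by simp_all
  have "Min ?H = 1 \<longleftrightarrow> (\<forall>x\<in>?H. x = 1)"
    using H Min_in[OF H] reach_prob_bounds[OF mdp] by (auto simp: Min_eq_iff intro: antisym)
  then show ?thesis
    by (simp add: reach_prob_opt_def opt_real_def cInf_eq_Min[OF H])
qed

lemma reach_prob_opt_OMax_eq_1_iff:
  assumes mdp: "is_mdp P"
  shows "reach_prob_opt OMax P T s = 1 \<longleftrightarrow> (\<exists>\<sigma>\<in>strategies P. reach_prob P \<sigma> T s = 1)"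
proof -
  let ?H = "(\<lambda>\<sigma>. reach_prob P \<sigma> T s) ` strategies P"
  have H: "finite ?H" "?H \<noteq> {}"
    using strategies_nonempty[OF mdp] by simp_all
  have "Max ?H = 1 \<longleftrightarrow> 1 \<in> ?H"
    using H reach_prob_bounds[OF mdp] by (auto simp: Max_eq_iff)
  then show ?thesis
    by (auto simp: reach_prob_opt_def opt_real_def cSup_eq_Max[OF H])
qed

theorem lemma3:
  fixes P :: "'s::finite \<Rightarrow> 'a::finite \<Rightarrow> 's \<Rightarrow> real"
    and T :: "'s set" and o' :: opt and s :: 's
  assumes "is_mdp P"
  shows "lfp (Dtilde o' P T) s = \<infinity> \<longleftrightarrow> reach_prob_opt o' P T s = 1"
proof (cases o')
  case OMin
  then show ?thesis
    using lfp_Dtilde_OMin_infinite_iff[OF assms] reach_prob_opt_OMin_eq_1_iff[OF assms] by simp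
next
  case OMax
  then show ?thesis
    using lfp_Dtilde_OMax_infinite_iff[OF assms] reach_prob_opt_OMax_eq_1_iff[OF assms] by simp
qed

end
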